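(* Let $S$ be a Boolean inverse semigroup and $s,t\in S$ with $s\sim t$. Then $s\,\triangledown\,t=s\vee t$.
   Context: $S$ is an inverse semigroup with zero in which every pair of compatible elements has a join, multiplication distributes over such joins, and the semilattice of idempotents is a generalized Boolean algebra (a distributive lattice with bottom in which each principal order ideal is a unital Boolean algebra); no identity is assumed. $\mathbf{d}(a)=a^{-1}a$, $\mathbf{r}(a)=aa^{-1}$; $s\sim t$ means $s^{-1}t$ and $st^{-1}$ are idempotents. For idempotents $e,f$, $e\setminus ef$ denotes the relative complement of $ef$ below $e$. For $a,b\in S$ put $e=\mathbf{d}(a)\setminus\mathbf{d}(a)\mathbf{d}(b)$, $f=\mathbf{r}(b)\setminus\mathbf{r}(a)\mathbf{r}(b)$, $a\ominus b=fae$ (left skew difference; it is orthogonal to $b$), and $a\,\triangledown\,b=(a\ominus b)\vee b$ (left skew join). *)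

theory Defs
  imports Main
begin

definition inverse_semigroup :: "('a \<Rightarrow> 'a \<Rightarrow> 'a) \<Rightarrow> bool" where
  "inverse_semigroup m \<longleftrightarrow>
     (\<forall>a b c. m (m a b) c = m a (m b c)) \<and>
     (\<forall>a. \<exists>!b. m (m a b) a = a \<and> m (m b a) b = b)"

definition isg_inv :: "('a \<Rightarrow> 'a \<Rightarrow> 'a) \<Rightarrow> 'a \<Rightarrow> 'a" where
  "isg_inv m a = (THE b. m (m a b) a = a \<and> m (m b a) b = b)"

definition is_zero :: "('a \<Rightarrow> 'a \<Rightarrow> 'a) \<Rightarrow> 'a \<Rightarrow> bool" where
  "is_zero m z \<longleftrightarrow> (\<forall>a. m z a = z \<and> m a z = z)"

definition idem :: "('a \<Rightarrow> 'a \<Rightarrow> 'a) \<Rightarrow> 'a \<Rightarrow> bool" where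
  "idem m e \<longleftrightarrow> m e e = e"

definition dom_s :: "('a \<Rightarrow> 'a \<Rightarrow> 'a) \<Rightarrow> 'a \<Rightarrow> 'a" where
  "dom_s m a = m (isg_inv m a) a"

definition ran_s :: "('a \<Rightarrow> 'a \<Rightarrow> 'a) \<Rightarrow> 'a \<Rightarrow> 'a" where
  "ran_s m a = m a (isg_inv m a)"

definition nat_le :: "('a \<Rightarrow> 'a \<Rightarrow> 'a) \<Rightarrow> 'a \<Rightarrow> 'a \<Rightarrow> bool" where
  "nat_le m s t \<longleftrightarrow> s = m t (dom_s m s)"

definition compat :: "('a \<Rightarrow> 'a \<Rightarrow> 'a) \<Rightarrow> 'a \<Rightarrow> 'a \<Rightarrow> bool" where
  "compat m s t \<longleftrightarrow> idem m (m (isg_inv m s) t) \<and> idem m (m s (isg_inv m t))"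

definition is_join :: "('a \<Rightarrow> 'a \<Rightarrow> 'a) \<Rightarrow> 'a \<Rightarrow> 'a \<Rightarrow> 'a \<Rightarrow> bool" where
  "is_join m x s t \<longleftrightarrow> nat_le m s x \<and> nat_le m t x \<and>
     (\<forall>y. nat_le m s y \<and> nat_le m t y \<longrightarrow> nat_le m x y)"

definition join :: "('a \<Rightarrow> 'a \<Rightarrow> 'a) \<Rightarrow> 'a \<Rightarrow> 'a \<Rightarrow> 'a" where
  "join m s t = (THE x. is_join m x s t)"

definition is_join_E :: "('a \<Rightarrow> 'a \<Rightarrow> 'a) \<Rightarrow> 'a \<Rightarrow> 'a \<Rightarrow> 'a \<Rightarrow> bool" where
  "is_join_E m x e f \<longleftrightarrow> idem m x \<and> nat_le m e x \<and> nat_le m f x \<and>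
     (\<forall>y. idem m y \<and> nat_le m e y \<and> nat_le m f y \<longrightarrow> nat_le m x y)"

definition join_E :: "('a \<Rightarrow> 'a \<Rightarrow> 'a) \<Rightarrow> 'a \<Rightarrow> 'a \<Rightarrow> 'a" where
  "join_E m e f = (THE x. is_join_E m x e f)"

text \<open>The idempotents form a generalized Boolean algebra: a distributive lattice
  (meet = product) with bottom z in which every principal order ideal is a Boolean algebra,
  i.e. relative complements exist.\<close>
definition gen_boolean_idems :: "('a \<Rightarrow> 'a \<Rightarrow> 'a) \<Rightarrow> 'a \<Rightarrow> bool" where
  "gen_boolean_idems m z \<longleftrightarrow>
     (\<forall>e f. idem m e \<and> idem m f \<longrightarrow> (\<exists>x. is_join_E m x e f)) \<and>
     (\<forall>e f g. idem m e \<and> idem m f \<and> idem m g \<longrightarrow>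
         m e (join_E m f g) = join_E m (m e f) (m e g)) \<and>
     (\<forall>e f. idem m e \<and> idem m f \<and> nat_le m e f \<longrightarrow>
         (\<exists>g. idem m g \<and> nat_le m g f \<and> m e g = z \<and> join_E m e g = f))"

definition rel_compl :: "('a \<Rightarrow> 'a \<Rightarrow> 'a) \<Rightarrow> 'a \<Rightarrow> 'a \<Rightarrow> 'a \<Rightarrow> 'a" where
  "rel_compl m z e f = (THE g. idem m g \<and> nat_le m g e \<and> m f g = z \<and> join_E m f g = e)"

definition boolean_inverse_semigroup :: "('a \<Rightarrow> 'a \<Rightarrow> 'a) \<Rightarrow> 'a \<Rightarrow> bool" where
  "boolean_inverse_semigroup m z \<longleftrightarrow>
     inverse_semigroup m \<and> is_zero m z \<and>
     (\<forall>s t. compat m s t \<longrightarrow> (\<exists>x. is_join m x s t)) \<and>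
     (\<forall>a s t. compat m s t \<longrightarrow>
         m a (join m s t) = join m (m a s) (m a t) \<and>
         m (join m s t) a = join m (m s a) (m t a)) \<and>
     gen_boolean_idems m z"

definition skew_diff :: "('a \<Rightarrow> 'a \<Rightarrow> 'a) \<Rightarrow> 'a \<Rightarrow> 'a \<Rightarrow> 'a \<Rightarrow> 'a" where
  "skew_diff m z a b =
     (let e = rel_compl m z (dom_s m a) (m (dom_s m a) (dom_s m b));
          f = rel_compl m z (ran_s m a) (m (ran_s m a) (ran_s m b))
      in m (m f a) e)"

definition skew_join :: "('a \<Rightarrow> 'a \<Rightarrow> 'a) \<Rightarrow> 'a \<Rightarrow> 'a \<Rightarrow> 'a \<Rightarrow> 'a" where
  "skew_join m z a b = join m (skew_diff m z a b) b"

end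

theory Submission
  imports Defs
begin

text \<open>
  Write \<open>e = d(s) \ d(s)d(t)\<close> and \<open>f = r(s) \ r(s)r(t)\<close>, so that \<open>s \<ominus> t = f s e\<close>.
  When \<open>s \<sim> t\<close>, the idempotent \<open>e\<close> commutes with \<open>s\<^sup>-\<^sup>1t\<close> and is orthogonal to \<open>d(t)\<close>, so the
  range of \<open>s e\<close> is orthogonal to \<open>r(t)\<close> and lies below \<open>f\<close>; hence \<open>s \<ominus> t = s e\<close>.
  Since \<open>d(s) = d(s)d(t) \<or> e\<close>, distributivity gives \<open>s = s d(t) \<or> s e = t d(s) \<or> s e\<close>,
  so every upper bound of \<open>s e\<close> and \<open>t\<close> is an upper bound of \<open>s\<close>; hence
  \<open>s e \<or> t = s \<or> t\<close>.
\<close>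

locale inv_semigroup =
  fixes m :: "'a \<Rightarrow> 'a \<Rightarrow> 'a" (infixl "\<cdot>" 70)
  assumes inverse_semigroup: "inverse_semigroup m"
begin

abbreviation inv_of :: "'a \<Rightarrow> 'a" ("_\<^sup>-\<^sup>1" [1000] 999) where "a\<^sup>-\<^sup>1 \<equiv> isg_inv m a"
abbreviation dom_of :: "'a \<Rightarrow> 'a" ("\<^bold>d") where "\<^bold>d \<equiv> dom_s m"
abbreviation ran_of :: "'a \<Rightarrow> 'a" ("\<^bold>r") where "\<^bold>r \<equiv> ran_s m"

lemma assoc [simp]: "a \<cdot> b \<cdot> c = a \<cdot> (b \<cdot> c)"
  using inverse_semigroup unfolding inverse_semigroup_def by blast

lemma inverse_ex1: "\<exists>!b. a \<cdot> b \<cdot> a = a \<and> b \<cdot> a \<cdot> b = b"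
  using inverse_semigroup unfolding inverse_semigroup_def by blast

lemma inverse_props: "a \<cdot> a\<^sup>-\<^sup>1 \<cdot> a = a \<and> a\<^sup>-\<^sup>1 \<cdot> a \<cdot> a\<^sup>-\<^sup>1 = a\<^sup>-\<^sup>1"
  unfolding isg_inv_def by (rule theI'[OF inverse_ex1])

lemma mult_inv_mult [simp]: "a \<cdot> (a\<^sup>-\<^sup>1 \<cdot> a) = a"
  and inv_mult_inv [simp]: "a\<^sup>-\<^sup>1 \<cdot> (a \<cdot> a\<^sup>-\<^sup>1) = a\<^sup>-\<^sup>1"
  using inverse_props by simp_all

lemma mult_inv_mult_left [simp]: "a \<cdot> (a\<^sup>-\<^sup>1 \<cdot> (a \<cdot> x)) = a \<cdot> x"
  and inv_mult_inv_left [simp]: "a\<^sup>-\<^sup>1 \<cdot> (a \<cdot> (a\<^sup>-\<^sup>1 \<cdot> x)) = a\<^sup>-\<^sup>1 \<cdot> x"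
  by (metis assoc mult_inv_mult, metis assoc inv_mult_inv)

lemma inv_unique:
  assumes "a \<cdot> (b \<cdot> a) = a" and "b \<cdot> (a \<cdot> b) = b" shows "b = a\<^sup>-\<^sup>1"
proof -
  have "a \<cdot> b \<cdot> a = a \<and> b \<cdot> a \<cdot> b = b" using assms by simp
  with inverse_ex1[of a] inverse_props[of a] show ?thesis by (auto simp del: assoc)
qed

lemma inv_inv [simp]: "(a\<^sup>-\<^sup>1)\<^sup>-\<^sup>1 = a"
  by (metis mult_inv_mult inv_mult_inv inv_unique)

lemma idemD [simp]: "idem m e \<Longrightarrow> e \<cdot> e = e"
  and idem_mult_left [simp]: "idem m e \<Longrightarrow> e \<cdot> (e \<cdot> x) = e \<cdot> x"
  unfolding idem_def by (simp, metis assoc)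

lemma idem_inv: "idem m e \<Longrightarrow> e\<^sup>-\<^sup>1 = e"
  by (rule inv_unique[symmetric]) simp_all

lemma idem_mult:
  assumes e: "idem m e" and f: "idem m f" shows "idem m (e \<cdot> f)"
proof -
  define x where "x = (e \<cdot> f)\<^sup>-\<^sup>1"
  have ef_x: "e \<cdot> (f \<cdot> (x \<cdot> (e \<cdot> f))) = e \<cdot> f"
    and x_ef: "x \<cdot> (e \<cdot> (f \<cdot> x)) = x"
    and x_ef_left: "x \<cdot> (e \<cdot> (f \<cdot> (x \<cdot> y))) = x \<cdot> y" for y
    unfolding x_def by (metis assoc mult_inv_mult, metis assoc inv_mult_inv, metis assoc inv_mult_inv)
  have "f \<cdot> (x \<cdot> e) = (e \<cdot> f)\<^sup>-\<^sup>1"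
    by (rule inv_unique) (simp_all add: e f ef_x x_ef_left)
  then have "f \<cdot> (x \<cdot> e) = x" unfolding x_def .
  then have "x \<cdot> e = x" and "f \<cdot> x = x"
    by (metis assoc idemD e, metis assoc idem_mult_left f)
  then have "idem m x" using x_ef unfolding idem_def by (metis assoc)
  moreover have "e \<cdot> f = x\<^sup>-\<^sup>1" unfolding x_def by simp
  ultimately show ?thesis using idem_inv by simp
qed

lemma idem_commute:
  assumes e: "idem m e" and f: "idem m f" shows "e \<cdot> f = f \<cdot> e"
proof -
  have ef: "idem m (e \<cdot> f)" and fe: "idem m (f \<cdot> e)" using idem_mult e f by auto
  have "e \<cdot> (f \<cdot> (e \<cdot> f)) = e \<cdot> f" and "f \<cdot> (e \<cdot> (f \<cdot> e)) = f \<cdot> e"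
    using ef fe unfolding idem_def by simp_all
  then have "f \<cdot> e = (e \<cdot> f)\<^sup>-\<^sup>1"
    by (intro inv_unique) (simp_all add: e f)
  then show ?thesis using idem_inv[OF ef] by simp
qed

lemma idem_left_commute: "idem m e \<Longrightarrow> idem m f \<Longrightarrow> e \<cdot> (f \<cdot> x) = f \<cdot> (e \<cdot> x)"
  by (metis assoc idem_commute)

lemma idem_dom: "idem m (\<^bold>d a)" and idem_ran: "idem m (\<^bold>r a)"
  unfolding idem_def dom_s_def ran_s_def by simp_all

lemma mult_dom [simp]: "a \<cdot> \<^bold>d a = a" and ran_mult [simp]: "\<^bold>r a \<cdot> a = a"
  unfolding dom_s_def ran_s_def by simp_all

lemma idem_dom_left_commute: "idem m e \<Longrightarrow> e \<cdot> (a\<^sup>-\<^sup>1 \<cdot> (a \<cdot> x)) = a\<^sup>-\<^sup>1 \<cdot> (a \<cdot> (e \<cdot> x))"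
  using idem_left_commute[OF _ idem_dom] unfolding dom_s_def by simp

lemma inv_mult: "(a \<cdot> b)\<^sup>-\<^sup>1 = b\<^sup>-\<^sup>1 \<cdot> a\<^sup>-\<^sup>1"
proof (rule inv_unique[symmetric])
  have commute: "b \<cdot> (b\<^sup>-\<^sup>1 \<cdot> (a\<^sup>-\<^sup>1 \<cdot> (a \<cdot> x))) = a\<^sup>-\<^sup>1 \<cdot> (a \<cdot> (b \<cdot> (b\<^sup>-\<^sup>1 \<cdot> x)))" for x
    using idem_left_commute[OF idem_ran[of b] idem_dom[of a]] unfolding dom_s_def ran_s_def by simp
  show "a \<cdot> b \<cdot> (b\<^sup>-\<^sup>1 \<cdot> a\<^sup>-\<^sup>1 \<cdot> (a \<cdot> b)) = a \<cdot> b"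
    using commute by simp
  show "b\<^sup>-\<^sup>1 \<cdot> a\<^sup>-\<^sup>1 \<cdot> (a \<cdot> b \<cdot> (b\<^sup>-\<^sup>1 \<cdot> a\<^sup>-\<^sup>1)) = b\<^sup>-\<^sup>1 \<cdot> a\<^sup>-\<^sup>1"
    using commute[symmetric] by simp
qed

lemma dom_idem: "idem m e \<Longrightarrow> \<^bold>d e = e"
  unfolding dom_s_def by (simp add: idem_inv idem_def)

lemma dom_mult_idem: "idem m e \<Longrightarrow> \<^bold>d (s \<cdot> e) = \<^bold>d s \<cdot> e"
  unfolding dom_s_def inv_mult
  by (simp add: idem_inv idem_dom_left_commute)

lemma nat_le_refl: "nat_le m s s"
  unfolding nat_le_def by simp

lemma mult_idem_nat_le: "idem m e \<Longrightarrow> nat_le m (s \<cdot> e) s"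
  unfolding nat_le_def by (simp add: dom_mult_idem) (simp add: dom_s_def)

lemma nat_le_idem_iff: "idem m e \<Longrightarrow> nat_le m e f \<longleftrightarrow> e = f \<cdot> e"
  unfolding nat_le_def by (simp add: dom_idem)

lemma nat_le_dom: assumes "nat_le m s t" shows "\<^bold>d s = \<^bold>d t \<cdot> \<^bold>d s"
  using dom_mult_idem[OF idem_dom, of t s] assms unfolding nat_le_def by simp

lemma nat_le_antisym: assumes "nat_le m s t" "nat_le m t s" shows "s = t"
proof -
  have "\<^bold>d s = \<^bold>d t"
    using nat_le_dom[OF assms(1)] nat_le_dom[OF assms(2)] idem_commute[OF idem_dom idem_dom] by metis
  then show ?thesis using assms(1) unfolding nat_le_def by simp
qed

lemma nat_le_trans: assumes "nat_le m s t" "nat_le m t u" shows "nat_le m s u"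
  using assms nat_le_dom[OF assms(1)] unfolding nat_le_def by (metis assoc)

lemma nat_le_idem: assumes "nat_le m s e" "idem m e" shows "idem m s"
  using assms idem_mult[OF _ idem_dom] unfolding nat_le_def by metis

lemma join_eqI: "is_join m x s t \<Longrightarrow> join m s t = x"
  unfolding join_def is_join_def using nat_le_antisym by (blast intro: the_equality)

lemma join_E_eqI: "is_join_E m x e f \<Longrightarrow> join_E m e f = x"
  unfolding join_E_def is_join_E_def using nat_le_antisym by (blast intro: the_equality)

lemma compat_mult_dom: assumes "compat m s t" shows "s \<cdot> \<^bold>d t = t \<cdot> \<^bold>d s"
proof -
  have p: "idem m (s \<cdot> t\<^sup>-\<^sup>1)" using assms unfolding compat_def by simp
  then have tp: "t \<cdot> s\<^sup>-\<^sup>1 = s \<cdot> t\<^sup>-\<^sup>1" using idem_inv[OF p] unfolding inv_mult by simp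
  have "s \<cdot> \<^bold>d t = s \<cdot> (\<^bold>d s \<cdot> \<^bold>d t)" by (simp add: dom_s_def)
  also have "\<dots> = s \<cdot> (\<^bold>d t \<cdot> \<^bold>d s)" by (simp add: idem_commute idem_dom)
  also have "\<dots> = (s \<cdot> t\<^sup>-\<^sup>1) \<cdot> (t \<cdot> s\<^sup>-\<^sup>1) \<cdot> s" by (simp add: dom_s_def)
  also have "\<dots> = (s \<cdot> t\<^sup>-\<^sup>1) \<cdot> s" using p unfolding tp idem_def by simp
  also have "\<dots> = t \<cdot> \<^bold>d s" unfolding tp[symmetric] by (simp add: dom_s_def)
  finally show ?thesis .
qed

end

locale boolean_inv_semigroup = inv_semigroup +
  fixes z :: 'a
  assumes boolean: "boolean_inverse_semigroup m z"
begin

lemma zero_mult [simp]: "z \<cdot> a = z" and mult_zero [simp]: "a \<cdot> z = z"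
  using boolean unfolding boolean_inverse_semigroup_def is_zero_def by blast+

lemma idem_zero: "idem m z"
  by (simp add: idem_def)

lemma is_join_join: "compat m s t \<Longrightarrow> is_join m (join m s t) s t"
  using boolean join_eqI unfolding boolean_inverse_semigroup_def by metis

lemma mult_join_distrib: "compat m s t \<Longrightarrow> a \<cdot> join m s t = join m (a \<cdot> s) (a \<cdot> t)"
  using boolean unfolding boolean_inverse_semigroup_def by blast

lemma compat_idem: "idem m e \<Longrightarrow> idem m f \<Longrightarrow> compat m e f"
  unfolding compat_def by (simp add: idem_inv idem_mult)

lemma is_join_E_join_E: "idem m e \<Longrightarrow> idem m f \<Longrightarrow> is_join_E m (join_E m e f) e f"
  using boolean join_E_eqI unfolding boolean_inverse_semigroup_def gen_boolean_idems_def by metis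

lemma mult_join_E_distrib:
  "idem m e \<Longrightarrow> idem m f \<Longrightarrow> idem m g \<Longrightarrow> e \<cdot> join_E m f g = join_E m (e \<cdot> f) (e \<cdot> g)"
  using boolean unfolding boolean_inverse_semigroup_def gen_boolean_idems_def by blast

lemma join_E_eq_join:
  assumes e: "idem m e" and f: "idem m f" shows "join_E m e f = join m e f"
proof -
  have E: "is_join_E m (join_E m e f) e f" by (rule is_join_E_join_E[OF e f])
  have J: "is_join m (join m e f) e f" by (rule is_join_join[OF compat_idem[OF e f]])
  have le: "nat_le m (join m e f) (join_E m e f)" using E J unfolding is_join_def is_join_E_def by blast
  then have "idem m (join m e f)" using E nat_le_idem unfolding is_join_E_def by blast
  then have "nat_le m (join_E m e f) (join m e f)" using E J unfolding is_join_def is_join_E_def by blast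
  then show ?thesis using le by (rule nat_le_antisym)
qed

lemma join_E_zero_left: "idem m e \<Longrightarrow> join_E m z e = e"
  by (rule join_E_eqI) (simp add: is_join_E_def nat_le_idem_iff idem_zero nat_le_refl)

lemma mult_join_E_orthogonal:
  assumes w: "idem m w" and f: "idem m f" and g: "idem m g"
    and below: "w \<cdot> join_E m f g = w" and orth: "w \<cdot> f = z"
  shows "w \<cdot> g = w"
proof -
  have "w = join_E m (w \<cdot> f) (w \<cdot> g)" using below mult_join_E_distrib[OF w f g] by simp
  also have "\<dots> = w \<cdot> g" using orth join_E_zero_left[OF idem_mult[OF w g]] by simp
  finally show ?thesis by simp
qed

lemma rel_compl_spec:
  assumes e: "idem m e" and f: "idem m f" and "nat_le m f e"
  shows "idem m (rel_compl m z e f) \<and> nat_le m (rel_compl m z e f) e \<and>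
    f \<cdot> rel_compl m z e f = z \<and> join_E m f (rel_compl m z e f) = e"
  unfolding rel_compl_def
proof (rule theI')
  let ?compl = "\<lambda>g. idem m g \<and> nat_le m g e \<and> f \<cdot> g = z \<and> join_E m f g = e"
  have absorb: "g \<cdot> h = g" if "?compl g" "?compl h" for g h
    by (rule mult_join_E_orthogonal)
      (use that f e in \<open>auto simp: idem_commute nat_le_idem_iff\<close>)
  show "\<exists>!g. ?compl g"
  proof (rule ex_ex1I)
    show "\<exists>g. ?compl g"
      using boolean assms unfolding boolean_inverse_semigroup_def gen_boolean_idems_def by blast
    show "g = h" if "?compl g" "?compl h" for g h
      using absorb[OF that] absorb[OF that(2,1)] idem_commute that by metis
  qed
qed

lemma rel_compl_meet:
  assumes e: "idem m e" and f: "idem m f"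
  defines "g \<equiv> rel_compl m z e (e \<cdot> f)"
  shows "idem m g" and "e \<cdot> g = g" and "f \<cdot> g = z" and "join_E m (e \<cdot> f) g = e"
proof -
  have "nat_le m (e \<cdot> f) e"
    using e f by (simp add: nat_le_idem_iff idem_mult)
  then have g: "idem m g \<and> nat_le m g e \<and> e \<cdot> f \<cdot> g = z \<and> join_E m (e \<cdot> f) g = e"
    unfolding g_def by (rule rel_compl_spec[OF e idem_mult[OF e f]])
  then show "idem m g" and "e \<cdot> g = g" and "join_E m (e \<cdot> f) g = e"
    by (auto simp: nat_le_idem_iff)
  then have "f \<cdot> g = f \<cdot> (e \<cdot> g)" by simp
  also have "\<dots> = z" using g by (simp add: idem_left_commute e f)
  finally show "f \<cdot> g = z" .
qed

lemma nat_le_of_agree_on_cover: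
  assumes g: "idem m g" and h: "idem m h" and cover: "join_E m g h = \<^bold>d s"
    and "y \<cdot> g = s \<cdot> g" and "y \<cdot> h = s \<cdot> h"
  shows "nat_le m s y"
proof -
  have dom_s: "\<^bold>d s = join m g h" using cover join_E_eq_join[OF g h] by simp
  have gh: "compat m g h" by (rule compat_idem[OF g h])
  have "s = s \<cdot> join m g h" by (simp flip: dom_s)
  also have "\<dots> = join m (s \<cdot> g) (s \<cdot> h)" by (rule mult_join_distrib[OF gh])
  also have "\<dots> = join m (y \<cdot> g) (y \<cdot> h)" using assms by simp
  also have "\<dots> = y \<cdot> \<^bold>d s" unfolding dom_s by (rule mult_join_distrib[OF gh, symmetric])
  finally show ?thesis unfolding nat_le_def .
qed

lemma skew_diff_compat:
  assumes st: "compat m s t"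
  shows "skew_diff m z s t = s \<cdot> rel_compl m z (\<^bold>d s) (\<^bold>d s \<cdot> \<^bold>d t)"
proof -
  define e where "e = rel_compl m z (\<^bold>d s) (\<^bold>d s \<cdot> \<^bold>d t)"
  define f where "f = rel_compl m z (\<^bold>r s) (\<^bold>r s \<cdot> \<^bold>r t)"
  have e: "idem m e" and dom_t_e: "\<^bold>d t \<cdot> e = z"
    unfolding e_def by (rule rel_compl_meet[OF idem_dom idem_dom])+
  have f: "idem m f" and ran_s_f: "join_E m (\<^bold>r s \<cdot> \<^bold>r t) f = \<^bold>r s"
    unfolding f_def by (rule rel_compl_meet[OF idem_ran idem_ran])+
  have "t \<cdot> e = z"
    using dom_t_e by (metis assoc mult_dom mult_zero)
  then have e_inv_t: "e \<cdot> t\<^sup>-\<^sup>1 = z"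
    using inv_mult[of t e] by (simp add: idem_inv e idem_zero)
  define w where "w = \<^bold>r (s \<cdot> e)"
  have w: "w = s \<cdot> (e \<cdot> s\<^sup>-\<^sup>1)"
    unfolding w_def ran_s_def inv_mult by (simp add: idem_inv e)
  have "w \<cdot> \<^bold>r s = w"
    unfolding w ran_s_def by simp
  moreover have "w \<cdot> \<^bold>r t = z"
  proof -
    have "idem m (s\<^sup>-\<^sup>1 \<cdot> t)" using st unfolding compat_def by simp
    then have "e \<cdot> (s\<^sup>-\<^sup>1 \<cdot> (t \<cdot> t\<^sup>-\<^sup>1)) = s\<^sup>-\<^sup>1 \<cdot> (t \<cdot> (e \<cdot> t\<^sup>-\<^sup>1))"
      using idem_left_commute[OF e] by (metis assoc)
    then show ?thesis unfolding w ran_s_def using e_inv_t by simp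
  qed
  ultimately have "w \<cdot> f = w"
    using mult_join_E_orthogonal[OF idem_ran[of "s \<cdot> e", folded w_def] idem_mult[OF idem_ran idem_ran] f]
      ran_s_f by (metis assoc)
  then have "f \<cdot> (w \<cdot> (s \<cdot> e)) = w \<cdot> (s \<cdot> e)"
    by (metis assoc idem_commute f idem_ran w_def)
  then have "f \<cdot> (s \<cdot> e) = s \<cdot> e"
    unfolding w_def by (simp only: ran_mult)
  then show ?thesis
    unfolding skew_diff_def Let_def e_def f_def by simp
qed

lemma join_mult_rel_compl:
  assumes st: "compat m s t"
  shows "join m (s \<cdot> rel_compl m z (\<^bold>d s) (\<^bold>d s \<cdot> \<^bold>d t)) t = join m s t"
proof -
  define e where "e = rel_compl m z (\<^bold>d s) (\<^bold>d s \<cdot> \<^bold>d t)"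
  have e: "idem m e" and dom_s_e: "\<^bold>d s \<cdot> e = e" and cover: "join_E m (\<^bold>d s \<cdot> \<^bold>d t) e = \<^bold>d s"
    unfolding e_def by (rule rel_compl_meet[OF idem_dom idem_dom])+
  have J: "is_join m (join m s t) s t" by (rule is_join_join[OF st])
  have "is_join m (join m s t) (s \<cdot> e) t"
    unfolding is_join_def
  proof (intro conjI allI impI)
    show "nat_le m (s \<cdot> e) (join m s t)" and "nat_le m t (join m s t)"
      using nat_le_trans[OF mult_idem_nat_le[OF e]] J unfolding is_join_def by blast+
    fix y assume y: "nat_le m (s \<cdot> e) y \<and> nat_le m t y"
    have "y \<cdot> e = s \<cdot> e"
      using y dom_mult_idem[OF e, of s] dom_s_e unfolding nat_le_def by simp
    moreover have "y \<cdot> (\<^bold>d s \<cdot> \<^bold>d t) = s \<cdot> (\<^bold>d s \<cdot> \<^bold>d t)"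
    proof -
      have "y \<cdot> (\<^bold>d s \<cdot> \<^bold>d t) = y \<cdot> \<^bold>d t \<cdot> \<^bold>d s" by (simp add: idem_commute idem_dom)
      also have "\<dots> = t \<cdot> \<^bold>d s" using y unfolding nat_le_def by simp
      also have "\<dots> = s \<cdot> \<^bold>d t" by (rule compat_mult_dom[OF st, symmetric])
      finally show ?thesis by (simp flip: assoc)
    qed
    ultimately have "nat_le m s y"
      by (intro nat_le_of_agree_on_cover[OF idem_mult[OF idem_dom idem_dom] e cover])
    then show "nat_le m (join m s t) y" using J y unfolding is_join_def by blast
  qed
  then show ?thesis unfolding e_def by (rule join_eqI)
qed

end

theorem lemma5p1:
  fixes m :: "'a \<Rightarrow> 'a \<Rightarrow> 'a" and z :: 'a and s t :: 'a
  assumes "boolean_inverse_semigroup m z"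
    and "compat m s t"
  shows "skew_join m z s t = join m s t"
proof -
  interpret boolean_inv_semigroup m z
    by unfold_locales (use assms(1) in \<open>simp_all add: boolean_inverse_semigroup_def\<close>)
  show ?thesis
    unfolding skew_join_def skew_diff_compat[OF assms(2)] by (rule join_mult_rel_compl[OF assms(2)])
qed

end
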